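(* Let $(a_n)_{n\in\mathbb{Z}}$ be real numbers with $0\ne|a_n|\le C' r^{|n|}$ for all $n\in\mathbb{Z}$, for some constants $C'>0$, $0<r<1$. Let $0<\rho<\pi$ and $g\in B_\rho$. If there is a constant $C>0$ such that $|g(n+a_n)|\le C|a_n|$ for all $n\in\mathbb{Z}$, then $g\equiv0$.
   Context: $B_\rho$ is the Bernstein space of entire functions $F$ satisfying $|F(x+iy)|\le C_F e^{\rho|y|}$ for all $x+iy\in\mathbb{C}$, with $C_F>0$ depending on $F$. *)

theory Defs
  imports "HOL-Analysis.Analysis"
begin

definition bernstein_space :: "real \<Rightarrow> (complex \<Rightarrow> complex) set" where
  "bernstein_space \<rho> = {F. F holomorphic_on UNIV \<and>
     (\<exists>C>0. \<forall>z. norm (F z) \<le> C * exp (\<rho> * \<bar>Im z\<bar>))}"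

end

(*
  Functions of exponential type are Lipschitz on the real axis, so the hypothesis on
  g (n + a n) gives g n = O(r ^ |n|). Multiplying by sinc (\<epsilon> z) ^ 2 with \<epsilon> = (pi - \<rho>) / 4
  yields an entire f of type \<tau> = \<rho> + 2 \<epsilon> < pi with |f z| = O(exp (\<tau> |Im z|) / |z| ^ 2) and
  still f n = O(r ^ |n|).

  Integrating f z exp (i \<eta> z) / sin (pi z) over the squares with vertices (N + 1/2) (\<plusminus>1 \<plusminus> i)
  shows that the Fourier series \<Sum> (-1) ^ n f n exp (i n \<eta>) vanishes for |\<eta>| < pi - \<tau>. Its
  coefficients decay geometrically, so in w = exp (i \<eta>) it is a Laurent series converging on
  an annulus around the unit circle; vanishing on an arc, it vanishes on the annulus, and
  Liouville's theorem then kills every coefficient: f n = 0 for all integers n. Integrating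
  f z / (sin (pi z) (z - w)) over the same squares finally gives f w = 0, so g vanishes off
  the real axis and hence everywhere.
*)

theory Submission
  imports Defs "HOL-Complex_Analysis.Complex_Analysis" "HOL-Real_Asymp.Real_Asymp"
begin

section \<open>The sine and the sinc function\<close>

lemma norm_sin_le_exp_abs_Im: "norm (sin z) \<le> exp \<bar>Im z\<bar>"
proof -
  have "norm (sin z) ^ 2 = (exp (2 * Im z) + inverse (exp (2 * Im z)) - 2 * cos (2 * Re z)) / 4"
    by (rule norm_sin_squared)
  also have "\<dots> \<le> (exp (2 * Im z) + inverse (exp (2 * Im z)) + 2) / 4"
    using cos_ge_minus_one[of "2 * Re z"] by (intro divide_right_mono) linarith+
  also have "\<dots> = ((exp (Im z) + exp (- Im z)) / 2) ^ 2"
    by (simp add: power2_eq_square exp_minus field_simps exp_add[symmetric])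
  also have "\<dots> \<le> (exp \<bar>Im z\<bar>) ^ 2"
    by (intro power_mono) (auto simp: abs_if)
  finally show ?thesis
    by (meson abs_ge_zero exp_ge_zero power2_le_imp_le)
qed

lemma norm_sin_ge_sinh_abs_Im: "(exp \<bar>Im z\<bar> - exp (- \<bar>Im z\<bar>)) / 2 \<le> norm (sin z)"
proof -
  have "((exp \<bar>Im z\<bar> - exp (- \<bar>Im z\<bar>)) / 2) ^ 2
          = (exp (2 * Im z) + inverse (exp (2 * Im z)) - 2) / 4"
    by (cases "Im z \<ge> 0") (simp_all add: power2_eq_square exp_minus field_simps exp_add[symmetric])
  also have "\<dots> \<le> (exp (2 * Im z) + inverse (exp (2 * Im z)) - 2 * cos (2 * Re z)) / 4"
    using cos_le_one[of "2 * Re z"] by simp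
  also have "\<dots> = norm (sin z) ^ 2"
    by (rule norm_sin_squared[symmetric])
  finally show ?thesis
    by (meson norm_ge_zero power2_le_imp_le)
qed

lemma norm_sin_ge_cosh_abs_Im:
  assumes "cos (2 * Re z) = -1"
  shows "exp \<bar>Im z\<bar> / 2 \<le> norm (sin z)"
proof -
  have "(exp \<bar>Im z\<bar> / 2) ^ 2 \<le> ((exp (Im z) + exp (- Im z)) / 2) ^ 2"
    by (intro power_mono) (auto simp: abs_if)
  also have "\<dots> = (exp (2 * Im z) + inverse (exp (2 * Im z)) + 2) / 4"
    by (simp add: power2_eq_square exp_minus field_simps exp_add[symmetric])
  also have "\<dots> = norm (sin z) ^ 2"
    using assms by (simp add: norm_sin_squared)
  finally show ?thesis
    by (meson norm_ge_zero power2_le_imp_le)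
qed

lemma sin_pi_times_eq_0_iff: "sin (complex_of_real pi * z) = 0 \<longleftrightarrow> z \<in> \<int>"
proof
  assume "sin (complex_of_real pi * z) = 0"
  then obtain n :: int where "complex_of_real pi * z = of_real (n * pi)"
    by (auto simp: sin_eq_0)
  then have "z = of_int n" by (simp add: field_simps)
  then show "z \<in> \<int>" by simp
next
  assume "z \<in> \<int>"
  then obtain n :: int where "z = of_int n" by (auto elim: Ints_cases)
  then show "sin (complex_of_real pi * z) = 0"
    by (auto simp: sin_eq_0 mult.commute intro!: exI[of _ n])
qed

lemma cos_pi_times_of_int: "cos (complex_of_real pi * of_int n) = (-1) ^ nat \<bar>n\<bar>"
proof -
  have "complex_of_real pi * of_int n = of_real (pi * of_int n)"
    by simp
  then have "cos (complex_of_real pi * of_int n) = of_real (cos (pi * of_int n))"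
    by (simp only: cos_of_real)
  then show ?thesis
    by (auto simp: even_nat_iff)
qed

lemma tendsto_sin_pi_times_div_sub_of_int:
  "((\<lambda>w. sin (complex_of_real pi * w) / (w - of_int n)) \<longlongrightarrow> pi * (-1) ^ nat \<bar>n\<bar>) (at (of_int n))"
proof -
  have "((\<lambda>w. sin (complex_of_real pi * w)) has_field_derivative
          complex_of_real pi * cos (complex_of_real pi * of_int n)) (at (of_int n))"
    by (auto intro!: derivative_eq_intros)
  then show ?thesis
    using sin_pi_times_eq_0_iff[of "of_int n"] by (simp add: has_field_derivative_iff cos_pi_times_of_int)
qed

lemma residue_div_sin_pi_times:
  fixes h :: "complex \<Rightarrow> complex" and n :: int
  assumes "0 < d" "d \<le> 1" "h holomorphic_on ball (of_int n) d"
  shows "residue (\<lambda>z. h z / sin (complex_of_real pi * z)) (of_int n)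
           = (-1) ^ nat \<bar>n\<bar> * h (of_int n) / pi"
proof (rule residue_simple')
  show "open (ball (of_int n :: complex) d)" "of_int n \<in> ball (of_int n :: complex) d"
    using assms by simp_all
  have "sin (complex_of_real pi * w) \<noteq> 0" if "w \<in> ball (of_int n) d - {of_int n}" for w
  proof
    assume "sin (complex_of_real pi * w) = 0"
    then obtain m :: int where "w = of_int m"
      using sin_pi_times_eq_0_iff by (auto elim: Ints_cases)
    with that assms have "m \<noteq> n" "norm (of_int (n - m) :: complex) < 1"
      by (auto simp: dist_norm)
    then show False
      by (simp only: norm_of_int)
  qed
  then show "(\<lambda>z. h z / sin (complex_of_real pi * z)) holomorphic_on ball (of_int n) d - {of_int n}"
    by (intro holomorphic_intros holomorphic_on_subset[OF assms(3)]) auto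
  define c :: complex where "c = pi * (-1) ^ nat \<bar>n\<bar>"
  have "c \<noteq> 0"
    by (simp add: c_def)
  have "((\<lambda>w. sin (complex_of_real pi * w) / (w - of_int n)) \<longlongrightarrow> c) (at (of_int n))"
    unfolding c_def by (rule tendsto_sin_pi_times_div_sub_of_int)
  then have inv: "((\<lambda>w. inverse (sin (complex_of_real pi * w) / (w - of_int n)))
                     \<longlongrightarrow> inverse c) (at (of_int n))"
    using \<open>c \<noteq> 0\<close> by (rule tendsto_inverse)
  have "isCont h (of_int n)"
    using assms by (intro holomorphic_on_imp_continuous_on[THEN continuous_on_interior])
      (auto simp: interior_open)
  then have "((\<lambda>w. h w * inverse (sin (complex_of_real pi * w) / (w - of_int n)))
                \<longlongrightarrow> h (of_int n) * inverse c) (at (of_int n))"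
    by (intro tendsto_mult inv isCont_tendsto_compose[where g = h] tendsto_ident_at)
  moreover have "h (of_int n) * inverse c = (-1) ^ nat \<bar>n\<bar> * h (of_int n) / pi"
    by (simp add: c_def divide_inverse flip: power_inverse)
  moreover have "h w * inverse (sin (complex_of_real pi * w) / (w - of_int n))
                   = h w / sin (complex_of_real pi * w) * (w - of_int n)" for w
    by simp
  ultimately show "((\<lambda>w. h w / sin (complex_of_real pi * w) * (w - of_int n))
               \<longlongrightarrow> (-1) ^ nat \<bar>n\<bar> * h (of_int n) / pi) (at (of_int n))"
    by simp
qed

definition sinc :: "complex \<Rightarrow> complex" where
  "sinc z = (if z = 0 then 1 else sin z / z)"

lemma holomorphic_on_sinc [holomorphic_intros]:
  assumes "h holomorphic_on A"
  shows "(\<lambda>z. sinc (h z)) holomorphic_on A"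
proof -
  have "deriv sin 0 = (1 :: complex)"
    by (rule DERIV_imp_deriv) (auto intro!: derivative_eq_intros)
  then have "sinc = (\<lambda>z. if z = 0 then deriv sin 0 else (sin z - sin 0) / (z - 0))"
    by (auto simp: sinc_def)
  moreover have "(\<lambda>z. if z = 0 then deriv sin 0 else (sin z - sin 0) / (z - 0)) holomorphic_on UNIV"
    by (rule pole_lemma) (auto intro: holomorphic_intros)
  ultimately have "sinc holomorphic_on h ` A"
    by (metis holomorphic_on_subset subset_UNIV)
  from holomorphic_on_compose[OF assms this] show ?thesis
    by (simp add: comp_def)
qed

lemma norm_sinc_le: "z \<noteq> 0 \<Longrightarrow> norm (sinc z) \<le> exp \<bar>Im z\<bar> / norm z"
  by (simp add: sinc_def norm_divide divide_right_mono norm_sin_le_exp_abs_Im)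

lemma norm_sinc_of_real_le_1: "norm (sinc (of_real x)) \<le> 1"
  by (simp add: sinc_def norm_divide abs_sin_x_le_abs_x divide_le_eq_1 sin_of_real)

lemma sinc_neq_0_if_Im_neq_0: "Im z \<noteq> 0 \<Longrightarrow> sinc z \<noteq> 0"
  by (auto simp: sinc_def sin_eq_0)

section \<open>Residue sums over squares\<close>

lemma norm_contour_integral_rectpath_le:
  assumes "Re a \<le> Re b" "Im a \<le> Im b" "continuous_on (path_image (rectpath a b)) k"
    and B: "\<And>z. z \<in> path_image (rectpath a b) \<Longrightarrow> norm (k z) \<le> B"
  shows "norm (contour_integral (rectpath a b) k) \<le> B * (2 * (Re b - Re a) + 2 * (Im b - Im a))"
proof -
  define a2 a4 where "a2 = Complex (Re b) (Im a)" and "a4 = Complex (Re a) (Im b)"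
  have image: "path_image (rectpath a b)
      = closed_segment a a2 \<union> closed_segment a2 b \<union> closed_segment b a4 \<union> closed_segment a4 a"
    by (simp add: rectpath_def Let_def path_image_join a2_def a4_def Un_assoc)
  have "a \<in> path_image (rectpath a b)"
    by (simp add: image)
  with B have "B \<ge> 0"
    using norm_ge_zero order_trans by blast
  have integrable: "k contour_integrable_on linepath u v"
    if "closed_segment u v \<subseteq> path_image (rectpath a b)" for u v
    using contour_integrable_continuous_linepath continuous_on_subset assms(3) that by blast
  have side: "norm (contour_integral (linepath u v) k) \<le> B * norm (v - u)"
    if "closed_segment u v \<subseteq> path_image (rectpath a b)" for u v
    using has_contour_integral_bound_linepath[OF has_contour_integral_integral
        [OF integrable[OF that]] \<open>B \<ge> 0\<close>] B that by blast
  have "k contour_integrable_on linepath a a2" "k contour_integrable_on linepath a2 b"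
    "k contour_integrable_on linepath b a4" "k contour_integrable_on linepath a4 a"
    by (rule integrable; auto simp: image)+
  then have "contour_integral (rectpath a b) k
      = contour_integral (linepath a a2) k + (contour_integral (linepath a2 b) k
        + (contour_integral (linepath b a4) k + contour_integral (linepath a4 a) k))"
    unfolding rectpath_def Let_def a2_def[symmetric] a4_def[symmetric]
    by (simp add: contour_integrable_joinI valid_path_join)
  also have "norm \<dots> \<le> B * norm (a2 - a) + (B * norm (b - a2) + (B * norm (a4 - b) + B * norm (a - a4)))"
    by (intro norm_triangle_le add_mono side order.refl; auto simp: image)
  also have "\<dots> = B * (2 * (Re b - Re a) + 2 * (Im b - Im a))"
    using assms(1,2) by (simp add: a2_def a4_def cmod_def algebra_simps)
  finally show ?thesis .
qed

definition square_path :: "real \<Rightarrow> real \<Rightarrow> complex" where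
  "square_path M = rectpath (Complex (-M) (-M)) (Complex M M)"

definition square_box :: "real \<Rightarrow> complex set" where
  "square_box M = box (Complex (-M) (-M)) (Complex M M)"

lemma norm_le_if_mem_square_box:
  assumes "z \<in> square_box M"
  shows "norm z \<le> 2 * M"
proof -
  have "\<bar>Re z\<bar> < M" "\<bar>Im z\<bar> < M"
    using assms by (auto simp: square_box_def in_box_complex_iff)
  then show ?thesis
    using cmod_le[of z] by linarith
qed

lemma mem_path_image_square_path:
  assumes "z \<in> path_image (square_path M)" "M \<ge> 0"
  shows "\<bar>Re z\<bar> = M \<and> \<bar>Im z\<bar> \<le> M \<or> \<bar>Im z\<bar> = M \<and> \<bar>Re z\<bar> \<le> M"
  using assms by (auto simp: square_path_def path_image_rectpath)

lemma norm_ge_if_mem_path_image_square_path: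
  assumes "z \<in> path_image (square_path M)" "M \<ge> 0"
  shows "M \<le> norm z"
  using mem_path_image_square_path[OF assms] abs_Re_le_cmod[of z] abs_Im_le_cmod[of z] by auto

lemma contour_integral_square_path_eq_sum_residues:
  assumes holo: "k holomorphic_on UNIV - P"
    and fin: "\<And>R. finite {p \<in> P. norm p \<le> R}"
    and "M > 0" and avoid: "P \<inter> path_image (square_path M) = {}"
  shows "contour_integral (square_path M) k = 2 * pi * \<i> * (\<Sum>p \<in> P \<inter> square_box M. residue k p)"
proof -
  define a b where "a = Complex (-M) (-M)" and "b = Complex M M"
  have ab: "Re a \<le> Re b" "Im a \<le> Im b"
    using \<open>M > 0\<close> by (auto simp: a_def b_def)
  have path: "square_path M = rectpath a b" and box: "square_box M = box a b"
    by (simp_all add: square_path_def square_box_def a_def b_def)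
  define S where "S = square_box (M + 1)"
  have "cbox a b \<subseteq> S"
    by (auto simp: a_def b_def S_def square_box_def in_box_complex_iff in_cbox_complex_iff)
  have image: "path_image (square_path M) = cbox a b - box a b"
    unfolding path using ab by (rule path_image_rectpath_cbox_minus_box)
  have "finite (P \<inter> S)"
  proof (rule finite_subset[OF _ fin[of "2 * (M + 1)"]])
    show "P \<inter> S \<subseteq> {p \<in> P. norm p \<le> 2 * (M + 1)}"
      by (auto simp: S_def dest: norm_le_if_mem_square_box)
  qed
  moreover have "k holomorphic_on S - P \<inter> S"
    by (rule holomorphic_on_subset[OF holo]) auto
  moreover have "path_image (square_path M) \<subseteq> S - P \<inter> S"
    using avoid image \<open>cbox a b \<subseteq> S\<close> by auto
  moreover have "\<forall>z. z \<notin> S \<longrightarrow> winding_number (square_path M) z = 0"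
    using \<open>cbox a b \<subseteq> S\<close> unfolding path by (auto intro!: winding_number_rectpath_outside ab)
  moreover have "open S" "connected S"
    by (simp_all add: S_def square_box_def convex_connected open_box)
  ultimately have "contour_integral (square_path M) k
      = 2 * pi * \<i> * (\<Sum>p \<in> P \<inter> S. winding_number (square_path M) p * residue k p)"
    by (intro Residue_theorem) (auto simp: square_path_def)
  also have "(\<Sum>p \<in> P \<inter> S. winding_number (square_path M) p * residue k p)
      = (\<Sum>p \<in> P \<inter> square_box M. winding_number (square_path M) p * residue k p)"
  proof (rule sum.mono_neutral_right[OF \<open>finite (P \<inter> S)\<close>])
    show "P \<inter> square_box M \<subseteq> P \<inter> S"
      using \<open>cbox a b \<subseteq> S\<close> box_subset_cbox[of a b] by (auto simp: box)
    show "\<forall>p \<in> P \<inter> S - P \<inter> square_box M. winding_number (square_path M) p * residue k p = 0"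
      using avoid image winding_number_rectpath_outside[OF ab] by (auto simp: path box)
  qed
  also have "\<dots> = (\<Sum>p \<in> P \<inter> square_box M. residue k p)"
    unfolding path box by (intro sum.cong refl) (simp add: winding_number_rectpath)
  finally show ?thesis .
qed

lemma norm_sum_residues_square_box_le:
  assumes holo: "k holomorphic_on UNIV - P"
    and fin: "\<And>R. finite {p \<in> P. norm p \<le> R}"
    and "M > 0" and avoid: "P \<inter> path_image (square_path M) = {}"
    and bound: "\<And>z. z \<in> path_image (square_path M) \<Longrightarrow> norm (k z) \<le> B"
  shows "norm (\<Sum>p \<in> P \<inter> square_box M. residue k p) \<le> 4 * B * M / pi"
proof -
  have "continuous_on (path_image (square_path M)) k"
    using avoid by (intro holomorphic_on_imp_continuous_on holomorphic_on_subset[OF holo]) auto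
  then have "norm (contour_integral (square_path M) k) \<le> B * (8 * M)"
    using norm_contour_integral_rectpath_le[of "Complex (-M) (-M)" "Complex M M" k B] bound \<open>M > 0\<close>
    by (simp add: square_path_def)
  then show ?thesis
    using contour_integral_square_path_eq_sum_residues[OF holo fin \<open>M > 0\<close> avoid]
    by (simp add: norm_mult field_simps)
qed

lemma sum_residues_square_box_tendsto_0:
  fixes M B :: "nat \<Rightarrow> real"
  assumes holo: "k holomorphic_on UNIV - P"
    and fin: "\<And>R. finite {p \<in> P. norm p \<le> R}"
    and "\<And>N. M N > 0"
    and avoid: "eventually (\<lambda>N. P \<inter> path_image (square_path (M N)) = {}) sequentially"
    and bound: "eventually (\<lambda>N. \<forall>z \<in> path_image (square_path (M N)). norm (k z) \<le> B N) sequentially"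
    and lim: "(\<lambda>N. B N * M N) \<longlonglongrightarrow> 0"
  shows "(\<lambda>N. \<Sum>p \<in> P \<inter> square_box (M N). residue k p) \<longlonglongrightarrow> 0"
proof (rule Lim_null_comparison)
  show "eventually (\<lambda>N. norm (\<Sum>p \<in> P \<inter> square_box (M N). residue k p) \<le> 4 * B N * M N / pi)
          sequentially"
    using avoid bound
  proof eventually_elim
    case (elim N)
    then show ?case
      using norm_sum_residues_square_box_le[OF holo fin \<open>M N > 0\<close>, of "B N"] by blast
  qed
  show "(\<lambda>N. 4 * B N * M N / pi) \<longlonglongrightarrow> 0"
    using tendsto_divide_zero[OF tendsto_mult_right_zero[OF lim, of 4], of pi]
    by (simp add: mult.assoc)
qed

section \<open>Interpolation at the integers\<close>

lemma finite_Ints_norm_le: "finite {p \<in> (\<int> :: complex set). norm p \<le> R}"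
proof (rule finite_subset)
  show "{p \<in> (\<int> :: complex set). norm p \<le> R} \<subseteq> of_int ` {-\<lceil>R\<rceil>..\<lceil>R\<rceil>}"
  proof
    fix p :: complex assume p: "p \<in> {p \<in> \<int>. norm p \<le> R}"
    then obtain n :: int where n: "p = of_int n"
      by (auto elim: Ints_cases)
    with p have "\<bar>real_of_int n\<bar> \<le> R"
      by (metis mem_Collect_eq norm_of_int)
    then have "n \<in> {-\<lceil>R\<rceil>..\<lceil>R\<rceil>}"
      by (auto; linarith)
    with n show "p \<in> of_int ` {-\<lceil>R\<rceil>..\<lceil>R\<rceil>}"
      by auto
  qed
qed simp

lemma Ints_disjoint_path_image_square_path:
  "\<int> \<inter> path_image (square_path (real N + 1/2)) = {}"
proof -
  have "of_int n \<notin> path_image (square_path (real N + 1/2))" for n :: int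
  proof
    assume "of_int n \<in> path_image (square_path (real N + 1/2))"
    then have "\<bar>real_of_int n\<bar> = real N + 1/2"
      using mem_path_image_square_path[of "of_int n" "real N + 1/2"] by auto
    then have "real_of_int \<bar>2 * n\<bar> = real_of_int (2 * int N + 1)"
      by simp
    then have "\<bar>2 * n\<bar> = 2 * int N + 1"
      by (simp only: of_int_eq_iff)
    then show False
      by presburger
  qed
  then show ?thesis
    by (auto elim: Ints_cases)
qed

lemma Ints_inter_square_box: "\<int> \<inter> square_box (real N + 1/2) = of_int ` {-int N..int N}"
proof safe
  fix p :: complex assume "p \<in> \<int>" "p \<in> square_box (real N + 1/2)"
  then obtain n :: int where n: "p = of_int n" "\<bar>real_of_int n\<bar> < real N + 1/2"
    by (auto elim!: Ints_cases simp: square_box_def in_box_complex_iff)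
  then have "n \<in> {-int N..int N}"
    by auto
  with n show "p \<in> of_int ` {-int N..int N}"
    by auto
next
  fix n :: int assume "n \<in> {-int N..int N}"
  then show "(of_int n :: complex) \<in> square_box (real N + 1/2)"
    by (auto simp: square_box_def in_box_complex_iff)
qed simp

lemma norm_sin_pi_times_ge_on_square_path:
  assumes "z \<in> path_image (square_path (real N + 1/2))"
  shows "exp (pi * \<bar>Im z\<bar>) / 4 \<le> norm (sin (complex_of_real pi * z))"
proof -
  define M where "M = real N + 1/2"
  have Im: "\<bar>Im (complex_of_real pi * z)\<bar> = pi * \<bar>Im z\<bar>"
    by (simp add: abs_mult)
  from mem_path_image_square_path[OF assms] consider "\<bar>Re z\<bar> = M" | "\<bar>Im z\<bar> = M"
    by (force simp: M_def)
  then show ?thesis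
  proof cases
    case 1
    then have "cos (2 * Re (complex_of_real pi * z)) = cos (2 * pi * M)"
      by (cases "Re z \<ge> 0") (auto simp: mult.assoc)
    also have "2 * pi * M = pi + real N * (2 * pi)"
      by (simp add: M_def algebra_simps)
    also have "cos \<dots> = -1"
      by (simp add: cos_add) (metis cos_2npi mult.commute mult.left_commute)
    finally have "exp (pi * \<bar>Im z\<bar>) / 2 \<le> norm (sin (complex_of_real pi * z))"
      using norm_sin_ge_cosh_abs_Im[of "complex_of_real pi * z"] Im by simp
    then show ?thesis
      using exp_gt_zero[of "pi * \<bar>Im z\<bar>"] by linarith
  next
    case 2
    define t where "t = pi * \<bar>Im z\<bar>"
    have "pi / 2 \<le> t"
      using 2 by (simp add: t_def M_def)
    then have "2 \<le> exp (2 * t)"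
      using exp_ge_add_one_self[of "2 * t"] pi_gt3 by linarith
    then have "2 * exp (- t) \<le> exp t"
      by (simp add: exp_minus field_simps mult_exp_exp)
    then have "exp t / 4 \<le> (exp t - exp (- t)) / 2"
      by simp
    also have "\<dots> \<le> norm (sin (complex_of_real pi * z))"
      using norm_sin_ge_sinh_abs_Im[of "complex_of_real pi * z"] Im by (simp add: t_def)
    finally show ?thesis
      by (simp add: t_def)
  qed
qed

lemma norm_div_sin_pi_times_le_on_square_path:
  fixes f :: "complex \<Rightarrow> complex"
  assumes decay: "\<And>z. z \<noteq> 0 \<Longrightarrow> norm (f z) \<le> K * exp (\<tau> * \<bar>Im z\<bar>) / (norm z)^2"
    and "K \<ge> 0" and "\<tau> + c \<le> pi"
    and z: "z \<in> path_image (square_path (real N + 1/2))"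
    and E: "norm E \<le> exp (c * \<bar>Im z\<bar>)"
  shows "norm (f z * E / sin (complex_of_real pi * z)) \<le> 4 * K / (real N + 1/2)^2"
proof -
  define M where "M = real N + 1/2"
  define t where "t = \<bar>Im z\<bar>"
  have "M > 0" "M \<le> norm z"
    using norm_ge_if_mem_path_image_square_path[OF z] by (simp_all add: M_def)
  then have "z \<noteq> 0"
    by auto
  then have "norm (f z) \<le> K * exp (\<tau> * t) / (norm z)^2"
    using decay by (simp add: t_def)
  also have "\<dots> \<le> K * exp (\<tau> * t) / M^2"
    using \<open>M > 0\<close> \<open>M \<le> norm z\<close> \<open>K \<ge> 0\<close> by (intro divide_left_mono mult_pos_pos power_mono) auto
  finally have f: "norm (f z) \<le> K * exp (\<tau> * t) / M^2" .
  have sin: "exp (pi * t) / 4 \<le> norm (sin (complex_of_real pi * z))"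
    using norm_sin_pi_times_ge_on_square_path[OF z] by (simp add: t_def)
  have "norm (f z * E / sin (complex_of_real pi * z))
          = norm (f z) * norm E / norm (sin (complex_of_real pi * z))"
    by (simp add: norm_mult norm_divide)
  also have "\<dots> \<le> (K * exp (\<tau> * t) / M^2 * exp (c * t)) / (exp (pi * t) / 4)"
    using f E sin \<open>K \<ge> 0\<close> by (intro frac_le mult_mono) (auto simp: t_def)
  also have "\<dots> = 4 * K / M^2 * exp ((\<tau> + c - pi) * t)"
    by (simp add: field_simps exp_add[symmetric] exp_diff)
  also have "\<dots> \<le> 4 * K / M^2"
    using \<open>\<tau> + c \<le> pi\<close> \<open>K \<ge> 0\<close>
    by (intro mult_right_le_one_le) (auto simp: t_def mult_nonpos_nonneg)
  finally show ?thesis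
    by (simp add: M_def)
qed

lemma sum_residues_div_sin_pi_times_square_box:
  fixes h :: "complex \<Rightarrow> complex"
  assumes holo: "h holomorphic_on UNIV"
  shows "(\<Sum>p \<in> \<int> \<inter> square_box (real N + 1/2). residue (\<lambda>z. h z / sin (complex_of_real pi * z)) p)
           = (\<Sum>n\<in>{-int N..int N}. (-1) ^ nat \<bar>n\<bar> * h (of_int n)) / pi"
proof -
  have "(\<Sum>p \<in> \<int> \<inter> square_box (real N + 1/2). residue (\<lambda>z. h z / sin (complex_of_real pi * z)) p)
      = (\<Sum>n\<in>{-int N..int N}. residue (\<lambda>z. h z / sin (complex_of_real pi * z)) (of_int n))"
    unfolding Ints_inter_square_box by (rule sum.reindex[unfolded comp_def]) (simp add: inj_on_def)
  also have "\<dots> = (\<Sum>n\<in>{-int N..int N}. (-1) ^ nat \<bar>n\<bar> * h (of_int n) / pi)"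
    by (intro sum.cong refl residue_div_sin_pi_times[where d = 1] holomorphic_on_subset[OF holo]) auto
  finally show ?thesis
    by (simp add: sum_divide_distrib)
qed

lemma alternating_exp_sums_tendsto_0:
  fixes f :: "complex \<Rightarrow> complex"
  assumes holo: "f holomorphic_on UNIV"
    and decay: "\<And>z. z \<noteq> 0 \<Longrightarrow> norm (f z) \<le> K * exp (\<tau> * \<bar>Im z\<bar>) / (norm z)^2"
    and "K \<ge> 0" and "\<tau> + \<bar>\<eta>\<bar> \<le> pi"
  shows "(\<lambda>N. \<Sum>n\<in>{-int N..int N}. (-1) ^ nat \<bar>n\<bar> * f (of_int n) * exp (\<i> * of_real \<eta> * of_int n))
           \<longlonglongrightarrow> 0"
proof -
  define h where "h z = f z * exp (\<i> * of_real \<eta> * z)" for z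
  have holo_h: "h holomorphic_on UNIV"
    unfolding h_def by (intro holomorphic_intros holo)
  have "(\<lambda>N. \<Sum>p \<in> \<int> \<inter> square_box (real N + 1/2). residue (\<lambda>z. h z / sin (complex_of_real pi * z)) p)
          \<longlonglongrightarrow> 0"
  proof (rule sum_residues_square_box_tendsto_0[where B = "\<lambda>N. 4 * K / (real N + 1/2)^2"])
    show "(\<lambda>z. h z / sin (complex_of_real pi * z)) holomorphic_on UNIV - \<int>"
      using sin_pi_times_eq_0_iff by (intro holomorphic_intros holomorphic_on_subset[OF holo_h]) auto
    show "finite {p \<in> (\<int> :: complex set). norm p \<le> R}" for R
      by (rule finite_Ints_norm_le)
    show "eventually (\<lambda>N. \<int> \<inter> path_image (square_path (real N + 1/2)) = {}) sequentially"
      by (simp add: Ints_disjoint_path_image_square_path)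
    have "norm (exp (\<i> * of_real \<eta> * z)) \<le> exp (\<bar>\<eta>\<bar> * \<bar>Im z\<bar>)" for z
      by (simp add: abs_mult[symmetric])
    then show "eventually (\<lambda>N. \<forall>z \<in> path_image (square_path (real N + 1/2)).
                 norm (h z / sin (complex_of_real pi * z)) \<le> 4 * K / (real N + 1/2)^2) sequentially"
      unfolding h_def using norm_div_sin_pi_times_le_on_square_path[OF decay \<open>K \<ge> 0\<close> \<open>\<tau> + \<bar>\<eta>\<bar> \<le> pi\<close>]
      by (intro always_eventually) auto
    show "(\<lambda>N. 4 * K / (real N + 1/2)^2 * (real N + 1/2)) \<longlonglongrightarrow> 0"
      by real_asymp
  qed simp
  then have "(\<lambda>N. (\<Sum>n\<in>{-int N..int N}. (-1) ^ nat \<bar>n\<bar> * h (of_int n)) / pi) \<longlonglongrightarrow> 0"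
    by (simp only: sum_residues_div_sin_pi_times_square_box[OF holo_h])
  from tendsto_mult_left[OF this, of "complex_of_real pi"] show ?thesis
    by (simp add: h_def mult.assoc)
qed

lemma sum_residues_div_sin_pi_times_div_sub:
  fixes f :: "complex \<Rightarrow> complex"
  assumes holo: "f holomorphic_on UNIV" and vanish: "\<And>n::int. f (of_int n) = 0"
    and "w \<notin> \<int>" and "w \<in> square_box M"
  shows "(\<Sum>p \<in> insert w \<int> \<inter> square_box M. residue (\<lambda>z. f z / sin (complex_of_real pi * z) / (z - w)) p)
           = f w / sin (complex_of_real pi * w)"
proof -
  define k where "k = (\<lambda>z. f z / sin (complex_of_real pi * z) / (z - w))"
  have "residue k (of_int n) = 0" for n :: int
  proof -
    define d where "d = min 1 (norm (w - of_int n))"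
    have "0 < d" "d \<le> 1"
      using \<open>w \<notin> \<int>\<close> by (auto simp: d_def)
    moreover have "w \<notin> ball (of_int n) d"
      by (auto simp: d_def dist_norm norm_minus_commute)
    ultimately have "residue (\<lambda>z. (f z / (z - w)) / sin (complex_of_real pi * z)) (of_int n)
        = (-1) ^ nat \<bar>n\<bar> * (f (of_int n) / (of_int n - w)) / pi"
      by (intro residue_div_sin_pi_times) (auto intro!: holomorphic_intros holomorphic_on_subset[OF holo])
    moreover have "k = (\<lambda>z. (f z / (z - w)) / sin (complex_of_real pi * z))"
      by (auto simp: k_def fun_eq_iff)
    ultimately show ?thesis
      by (simp add: vanish)
  qed
  then have Ints: "residue k p = 0" if "p \<in> \<int>" for p
    using that by (auto elim: Ints_cases)
  have "sin (complex_of_real pi * w) \<noteq> 0"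
    using \<open>w \<notin> \<int>\<close> sin_pi_times_eq_0_iff by blast
  moreover have "open {z. sin (complex_of_real pi * z) \<noteq> 0}"
    by (intro open_Collect_neq continuous_intros)
  ultimately have "residue k w = f w / sin (complex_of_real pi * w)"
    unfolding k_def
    by (intro residue_simple) (auto intro!: holomorphic_intros holomorphic_on_subset[OF holo])
  moreover have "finite (\<int> \<inter> square_box M)"
    by (rule finite_subset[OF _ finite_Ints_norm_le[of "2 * M"]]) (auto dest: norm_le_if_mem_square_box)
  ultimately have "(\<Sum>p \<in> insert w \<int> \<inter> square_box M. residue k p) = f w / sin (complex_of_real pi * w)"
    using \<open>w \<notin> \<int>\<close> \<open>w \<in> square_box M\<close> Ints by (simp add: Int_insert_left)
  then show ?thesis
    unfolding k_def .
qed

lemma norm_div_sin_pi_times_div_sub_le_on_square_path: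
  fixes f :: "complex \<Rightarrow> complex"
  assumes decay: "\<And>z. z \<noteq> 0 \<Longrightarrow> norm (f z) \<le> K * exp (\<tau> * \<bar>Im z\<bar>) / (norm z)^2"
    and "K \<ge> 0" and "\<tau> \<le> pi"
    and z: "z \<in> path_image (square_path (real N + 1/2))" and w: "2 * norm w \<le> real N"
  shows "norm (f z / sin (complex_of_real pi * z) / (z - w)) \<le> 8 * K / (real N + 1/2)^3"
proof -
  define M where "M = real N + 1/2"
  have "M \<le> norm z"
    using norm_ge_if_mem_path_image_square_path[OF z] by (simp add: M_def)
  then have "M / 2 \<le> norm (z - w)"
    using norm_triangle_ineq2[of z w] w by (simp add: M_def)
  moreover have "norm (f z / sin (complex_of_real pi * z)) \<le> 4 * K / M^2"
    using norm_div_sin_pi_times_le_on_square_path[OF decay \<open>K \<ge> 0\<close> _ z, of 0 1] \<open>\<tau> \<le> pi\<close>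
    by (simp add: M_def)
  ultimately have "norm (f z / sin (complex_of_real pi * z)) / norm (z - w) \<le> (4 * K / M^2) / (M / 2)"
    using \<open>K \<ge> 0\<close> by (intro frac_le) (auto simp: M_def)
  then have "norm (f z / sin (complex_of_real pi * z) / (z - w)) \<le> (4 * K / M^2) / (M / 2)"
    by (simp only: norm_divide)
  also have "\<dots> = 8 * K / M^3"
    by (simp add: M_def power2_eq_square power3_eq_cube)
  finally show ?thesis
    by (simp add: M_def)
qed

lemma sum_residues_div_sin_pi_times_div_sub_tendsto_0:
  fixes f :: "complex \<Rightarrow> complex"
  assumes holo: "f holomorphic_on UNIV"
    and decay: "\<And>z. z \<noteq> 0 \<Longrightarrow> norm (f z) \<le> K * exp (\<tau> * \<bar>Im z\<bar>) / (norm z)^2"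
    and "K \<ge> 0" and "\<tau> \<le> pi"
  shows "(\<lambda>N. \<Sum>p \<in> insert w \<int> \<inter> square_box (real N + 1/2).
            residue (\<lambda>z. f z / sin (complex_of_real pi * z) / (z - w)) p) \<longlonglongrightarrow> 0"
proof (rule sum_residues_square_box_tendsto_0[where B = "\<lambda>N. 8 * K / (real N + 1/2)^3"])
  have large: "eventually (\<lambda>N. 2 * norm w + 1 \<le> real N) sequentially"
    by real_asymp
  show "(\<lambda>z. f z / sin (complex_of_real pi * z) / (z - w)) holomorphic_on UNIV - insert w \<int>"
    using sin_pi_times_eq_0_iff by (intro holomorphic_intros holomorphic_on_subset[OF holo]) auto
  show "finite {p \<in> insert w \<int>. norm p \<le> R}" for R
    by (rule finite_subset[of _ "insert w {p \<in> \<int>. norm p \<le> R}"]) (auto simp: finite_Ints_norm_le)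
  show "eventually (\<lambda>N. insert w \<int> \<inter> path_image (square_path (real N + 1/2)) = {}) sequentially"
    using large
  proof eventually_elim
    case (elim N)
    then have "w \<notin> path_image (square_path (real N + 1/2))"
      using norm_ge_if_mem_path_image_square_path[of w "real N + 1/2"] by auto
    then show ?case
      using Ints_disjoint_path_image_square_path[of N] by auto
  qed
  show "eventually (\<lambda>N. \<forall>z \<in> path_image (square_path (real N + 1/2)).
          norm (f z / sin (complex_of_real pi * z) / (z - w)) \<le> 8 * K / (real N + 1/2)^3) sequentially"
    using large
  proof eventually_elim
    case (elim N)
    then have "2 * norm w \<le> real N"
      by linarith
    then show ?case
      using norm_div_sin_pi_times_div_sub_le_on_square_path[OF decay \<open>K \<ge> 0\<close> \<open>\<tau> \<le> pi\<close>] by blast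
  qed
  show "(\<lambda>N. 8 * K / (real N + 1/2)^3 * (real N + 1/2)) \<longlonglongrightarrow> 0"
    by real_asymp
qed simp

lemma eq_0_if_vanishes_on_Ints:
  fixes f :: "complex \<Rightarrow> complex"
  assumes holo: "f holomorphic_on UNIV"
    and decay: "\<And>z. z \<noteq> 0 \<Longrightarrow> norm (f z) \<le> K * exp (\<tau> * \<bar>Im z\<bar>) / (norm z)^2"
    and "K \<ge> 0" and "\<tau> \<le> pi" and vanish: "\<And>n::int. f (of_int n) = 0"
  shows "f w = 0"
proof (cases "w \<in> \<int>")
  case True
  then show ?thesis
    using vanish by (auto elim: Ints_cases)
next
  case False
  have "eventually (\<lambda>N. norm w + 1 \<le> real N) sequentially"
    by real_asymp
  then have "eventually (\<lambda>N. w \<in> square_box (real N + 1/2)) sequentially"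
    by eventually_elim
      (use abs_Re_le_cmod[of w] abs_Im_le_cmod[of w] in \<open>auto simp: square_box_def in_box_complex_iff\<close>)
  then have "eventually (\<lambda>N. (\<Sum>p \<in> insert w \<int> \<inter> square_box (real N + 1/2).
               residue (\<lambda>z. f z / sin (complex_of_real pi * z) / (z - w)) p)
             = f w / sin (complex_of_real pi * w)) sequentially"
    by eventually_elim (rule sum_residues_div_sin_pi_times_div_sub[OF holo vanish False])
  with sum_residues_div_sin_pi_times_div_sub_tendsto_0[OF holo decay \<open>K \<ge> 0\<close> \<open>\<tau> \<le> pi\<close>]
  have "(\<lambda>N. f w / sin (complex_of_real pi * w)) \<longlonglongrightarrow> 0"
    by (rule Lim_transform_eventually)
  moreover have "sin (complex_of_real pi * w) \<noteq> 0"
    using False sin_pi_times_eq_0_iff by blast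
  ultimately show ?thesis
    by (simp add: LIMSEQ_const_iff)
qed

section \<open>Two-sided power series\<close>

lemma sum_symmetric_int_interval:
  fixes c :: "int \<Rightarrow> 'a::comm_monoid_add"
  shows "(\<Sum>n\<in>{-int N..int N}. c n)
           = (\<Sum>n<Suc N. c (int n)) + (\<Sum>n<Suc N. if n = 0 then 0 else c (- int n))"
proof (induction N)
  case 0
  then show ?case by simp
next
  case (Suc N)
  have "{-int (Suc N)..int (Suc N)} = insert (int (Suc N)) (insert (- int (Suc N)) {-int N..int N})"
    by auto
  then have "(\<Sum>n\<in>{-int (Suc N)..int (Suc N)}. c n)
               = c (int (Suc N)) + (c (- int (Suc N)) + (\<Sum>n\<in>{-int N..int N}. c n))"
    by simp
  also have "\<dots> = (\<Sum>n<Suc (Suc N). c (int n)) + (\<Sum>n<Suc (Suc N). if n = 0 then 0 else c (- int n))"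
    unfolding Suc.IH by (simp add: algebra_simps)
  finally show ?case .
qed

lemma fps_conv_radius_ge_if_norm_nth_le:
  fixes F :: "complex fps"
  assumes "\<And>n. norm (fps_nth F n) \<le> L * r ^ n" and "0 \<le> r" "0 < R" "r * R < 1"
  shows "ereal R \<le> fps_conv_radius F"
proof -
  have "summable (\<lambda>n. L * (r * R) ^ n)"
    using assms by (intro summable_mult summable_geometric) auto
  then have "summable (\<lambda>n. fps_nth F n * of_real R ^ n)"
  proof (rule summable_comparison_test')
    show "norm (fps_nth F n * of_real R ^ n) \<le> L * (r * R) ^ n" for n
      using assms(1)[of n] \<open>0 < R\<close>
      by (simp add: norm_mult norm_power power_mult_distrib mult_right_mono)
  qed
  from conv_radius_geI[OF this] show ?thesis
    using \<open>0 < R\<close> by (simp add: fps_conv_radius_def)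
qed

lemma mem_eball_fps_conv_radius:
  assumes "ereal R \<le> fps_conv_radius F" "norm w < R"
  shows "w \<in> eball 0 (fps_conv_radius F)"
  using order_less_le_trans[of "ereal (norm w)" "ereal R" "fps_conv_radius F"] assms by simp

lemma holomorphic_on_eval_fps_inverse:
  fixes F :: "complex fps"
  assumes "ereal R \<le> fps_conv_radius F" "0 < R"
  shows "(\<lambda>w. eval_fps F (inverse w)) holomorphic_on {w. 1/R < norm w}"
proof -
  have "norm (inverse w) < R" if "1/R < norm w" for w :: complex
  proof -
    have "0 < norm w"
      using that \<open>0 < R\<close> by (smt (verit) divide_pos_pos)
    moreover have "1 < R * norm w"
      using that \<open>0 < R\<close> by (simp add: divide_less_eq mult.commute)
    ultimately have "1 / norm w < R"
      by (simp add: divide_less_eq mult.commute)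
    then show ?thesis
      by (metis norm_inverse inverse_eq_divide)
  qed
  then have "(eval_fps F \<circ> inverse) holomorphic_on {w. 1/R < norm w}"
    using \<open>0 < R\<close>
    by (intro holomorphic_on_compose holomorphic_intros holomorphic_on_eval_fps)
      (auto intro: mem_eball_fps_conv_radius[OF assms(1)] simp: order_le_less_trans)
  then show ?thesis
    by (simp add: comp_def)
qed

lemma holomorphic_on_glue:
  assumes "f holomorphic_on A" "g holomorphic_on B" "open A" "open B"
    and "\<And>z. z \<in> A \<Longrightarrow> z \<in> B \<Longrightarrow> f z = g z"
  shows "(\<lambda>z. if z \<in> A then f z else g z) holomorphic_on A \<union> B"
proof (rule holomorphic_on_Un)
  show "(\<lambda>z. if z \<in> A then f z else g z) holomorphic_on A"
    using assms(1) by (rule holomorphic_transform) simp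
  show "(\<lambda>z. if z \<in> A then f z else g z) holomorphic_on B"
    using assms(2) by (rule holomorphic_transform) (simp add: assms(5))
qed (use assms in auto)

lemma tendsto_eval_fps_inverse_at_infinity:
  fixes F :: "complex fps"
  assumes "0 < fps_conv_radius F"
  shows "((\<lambda>w. eval_fps F (inverse w)) \<longlongrightarrow> fps_nth F 0) at_infinity"
proof -
  have "isCont (eval_fps F) 0"
    using continuous_on_eval_fps[of F] assms
    by (intro continuous_on_interior[of "eball 0 (fps_conv_radius F)"]) (auto simp: interior_open zero_ereal_def)
  from isCont_tendsto_compose[OF this tendsto_inverse_0] show ?thesis
    by (simp add: eval_fps_at_0)
qed

lemma fps_eq_0_if_eval_eq_0_near_0:
  fixes F :: "complex fps"
  assumes "0 < e" "ereal e \<le> fps_conv_radius F" and eval: "\<And>w. norm w < e \<Longrightarrow> eval_fps F w = 0"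
  shows "F = 0"
proof (rule eval_fps_eqD)
  show "0 < fps_conv_radius F"
    using order_less_le_trans[of 0 "ereal e" "fps_conv_radius F"] assms by simp
  have "eventually (\<lambda>z. z \<in> ball 0 e) (nhds (0 :: complex))"
    using \<open>0 < e\<close> by (intro eventually_nhds_in_open) auto
  then show "eventually (\<lambda>z. eval_fps F z = eval_fps 0 z) (nhds 0)"
    by eventually_elim (simp add: eval)
qed simp

lemma eval_fps_eq_0_if_laurent_series_vanishes_on_annulus:
  fixes P Q :: "complex fps"
  assumes "1 < R" and P: "ereal R \<le> fps_conv_radius P" and Q: "ereal R \<le> fps_conv_radius Q"
    and "fps_nth Q 0 = 0"
    and annulus: "\<And>w. 1/R < norm w \<Longrightarrow> norm w < R \<Longrightarrow> eval_fps P w + eval_fps Q (inverse w) = 0"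
  shows "norm w < R \<Longrightarrow> eval_fps P w = 0" and "1/R < norm w \<Longrightarrow> eval_fps Q (inverse w) = 0"
proof -
  \<comment> \<open>\<open>E\<close> is entire and vanishes at infinity because \<open>fps_nth Q 0 = 0\<close>.\<close>
  define E where "E = (\<lambda>w. if w \<in> ball 0 R then eval_fps P w else - eval_fps Q (inverse w))"
  have "E holomorphic_on ball 0 R \<union> {w. 1/R < norm w}"
    unfolding E_def
  proof (rule holomorphic_on_glue)
    show "eval_fps P holomorphic_on ball 0 R"
      by (auto intro!: holomorphic_on_eval_fps mem_eball_fps_conv_radius[OF P])
    show "(\<lambda>w. - eval_fps Q (inverse w)) holomorphic_on {w. 1/R < norm w}"
      using \<open>1 < R\<close> by (intro holomorphic_on_minus holomorphic_on_eval_fps_inverse[OF Q]) simp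
    show "open (ball 0 R :: complex set)" "open {w :: complex. 1/R < norm w}"
      by (simp_all add: open_Collect_less continuous_on_norm_id)
    show "eval_fps P w = - eval_fps Q (inverse w)" if "w \<in> ball 0 R" "w \<in> {w. 1/R < norm w}" for w
      using annulus[of w] that by (simp add: eq_neg_iff_add_eq_0)
  qed
  moreover have "ball 0 R \<union> {w. 1/R < norm w} = (UNIV :: complex set)"
  proof -
    have "1/R < norm w" if "\<not> norm w < R" for w :: complex
      using that \<open>1 < R\<close> by (smt (verit) divide_less_eq_1_pos)
    then show ?thesis
      by auto
  qed
  ultimately have "E holomorphic_on UNIV"
    by simp
  moreover have "(E \<longlongrightarrow> 0) at_infinity"
  proof -
    have "0 < fps_conv_radius Q"
      using order_less_le_trans[of 0 "ereal R" "fps_conv_radius Q"] Q \<open>1 < R\<close> by simp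
    from tendsto_minus[OF tendsto_eval_fps_inverse_at_infinity[OF this]]
    have "((\<lambda>w. - eval_fps Q (inverse w)) \<longlongrightarrow> 0) at_infinity"
      using \<open>fps_nth Q 0 = 0\<close> by simp
    moreover have "eventually (\<lambda>w. - eval_fps Q (inverse w) = E w) at_infinity"
      by (intro eventually_at_infinityI[of R]) (simp add: E_def)
    ultimately show ?thesis
      by (simp add: Lim_transform_eventually)
  qed
  ultimately have E0: "E w = 0" for w
    by (rule Liouville_weak)
  show "eval_fps P w = 0" if "norm w < R"
    using E0[of w] that by (simp add: E_def)
  show "eval_fps Q (inverse w) = 0" if "1/R < norm w"
  proof (cases "norm w < R")
    case True
    with annulus[OF that True] E0[of w] show ?thesis
      by (simp add: E_def)
  qed (use E0[of w] in \<open>simp add: E_def\<close>)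
qed

lemma fps_eq_0_if_laurent_series_vanishes_on_annulus:
  fixes P Q :: "complex fps"
  assumes "1 < R" and P: "ereal R \<le> fps_conv_radius P" and Q: "ereal R \<le> fps_conv_radius Q"
    and "fps_nth Q 0 = 0"
    and annulus: "\<And>w. 1/R < norm w \<Longrightarrow> norm w < R \<Longrightarrow> eval_fps P w + eval_fps Q (inverse w) = 0"
  shows "P = 0" "Q = 0"
proof -
  have P_eval: "eval_fps P w = 0" if "norm w < R" for w
    using assms that by (rule eval_fps_eq_0_if_laurent_series_vanishes_on_annulus(1))
  have Q_eval: "eval_fps Q (inverse w) = 0" if "1/R < norm w" for w
    using assms that by (rule eval_fps_eq_0_if_laurent_series_vanishes_on_annulus(2))
  show "P = 0"
    using \<open>1 < R\<close> P P_eval by (intro fps_eq_0_if_eval_eq_0_near_0[of R]) auto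
  have "eval_fps Q u = 0" if "norm u < 1" for u
  proof (cases "u = 0")
    case True
    then show ?thesis
      using \<open>fps_nth Q 0 = 0\<close> by (simp add: eval_fps_at_0)
  next
    case False
    with that have "1 < norm (inverse u)"
      by (simp add: norm_inverse one_less_inverse)
    then have "1/R < norm (inverse u)"
      using \<open>1 < R\<close> by (smt (verit) divide_less_eq_1_pos)
    from Q_eval[OF this] show ?thesis
      by simp
  qed
  moreover have "ereal 1 \<le> fps_conv_radius Q"
    using Q \<open>1 < R\<close> by (meson ereal_less_eq(3) less_imp_le order_trans)
  ultimately show "Q = 0"
    by (intro fps_eq_0_if_eval_eq_0_near_0[of 1]) auto
qed

lemma islimpt_imaginary_segment: "0 < \<delta> \<Longrightarrow> 0 islimpt (\<lambda>\<eta>. \<i> * complex_of_real \<eta>) ` {-\<delta><..<\<delta>}"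
proof (rule islimptI)
  fix T :: "complex set" assume "0 < \<delta>" "0 \<in> T" "open T"
  then obtain e where "e > 0" "ball 0 e \<subseteq> T"
    by (auto simp: open_contains_ball)
  moreover define \<eta> where "\<eta> = min e \<delta> / 2"
  moreover have "0 < \<eta>" "\<eta> < \<delta>" "\<eta> < e"
    using \<open>0 < e\<close> \<open>0 < \<delta>\<close> by (auto simp: \<eta>_def)
  ultimately show "\<exists>y \<in> (\<lambda>\<eta>. \<i> * complex_of_real \<eta>) ` {-\<delta><..<\<delta>}. y \<in> T \<and> y \<noteq> 0"
    by (intro bexI[of _ "\<i> * of_real \<eta>"]) (auto simp: norm_mult)
qed

lemma laurent_series_vanishes_on_strip_if_vanishes_on_arc:
  fixes P Q :: "complex fps"
  assumes "1 < R" and P: "ereal R \<le> fps_conv_radius P" and Q: "ereal R \<le> fps_conv_radius Q"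
    and "0 < \<delta>"
    and arc: "\<And>\<eta>. \<bar>\<eta>\<bar> < \<delta> \<Longrightarrow> eval_fps P (exp (\<i> * of_real \<eta>)) + eval_fps Q (exp (- (\<i> * of_real \<eta>))) = 0"
    and "\<bar>Re \<zeta>\<bar> < ln R"
  shows "eval_fps P (exp \<zeta>) + eval_fps Q (exp (- \<zeta>)) = 0"
proof -
  define S where "S = {\<zeta>. Re \<zeta> < ln R} \<inter> {\<zeta>. - ln R < Re \<zeta>}"
  have exp_S: "norm (exp \<zeta>) < R" "norm (exp (- \<zeta>)) < R" if "\<zeta> \<in> S" for \<zeta>
  proof -
    have "exp (Re \<zeta>) < exp (ln R)" "exp (- Re \<zeta>) < exp (ln R)"
      using that by (auto simp: S_def)
    then show "norm (exp \<zeta>) < R" "norm (exp (- \<zeta>)) < R"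
      using \<open>1 < R\<close> by simp_all
  qed
  show ?thesis
  proof (rule analytic_continuation[where f = "\<lambda>\<zeta>. eval_fps P (exp \<zeta>) + eval_fps Q (exp (- \<zeta>))"
        and S = S and U = "(\<lambda>\<eta>. \<i> * of_real \<eta>) ` {-\<delta><..<\<delta>}" and \<xi> = 0])
    have "(eval_fps P \<circ> exp) holomorphic_on S" "(eval_fps Q \<circ> (\<lambda>\<zeta>. exp (- \<zeta>))) holomorphic_on S"
      by (rule holomorphic_on_compose;
          auto intro!: holomorphic_intros mem_eball_fps_conv_radius[OF P] mem_eball_fps_conv_radius[OF Q] exp_S)+
    then show "(\<lambda>\<zeta>. eval_fps P (exp \<zeta>) + eval_fps Q (exp (- \<zeta>))) holomorphic_on S"
      by (auto simp: comp_def intro: holomorphic_on_add)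
    show "open S"
      unfolding S_def by (intro open_Int open_halfspace_Re_lt open_halfspace_Re_gt)
    show "connected S"
      unfolding S_def by (intro convex_connected convex_Int convex_halfspace_Re_lt convex_halfspace_Re_gt)
    show "(\<lambda>\<eta>. \<i> * of_real \<eta>) ` {-\<delta><..<\<delta>} \<subseteq> S" "0 \<in> S" "\<zeta> \<in> S"
      using \<open>1 < R\<close> \<open>\<bar>Re \<zeta>\<bar> < ln R\<close> by (auto simp: S_def)
    show "0 islimpt (\<lambda>\<eta>. \<i> * complex_of_real \<eta>) ` {-\<delta><..<\<delta>}"
      using \<open>0 < \<delta>\<close> by (rule islimpt_imaginary_segment)
    show "eval_fps P (exp z) + eval_fps Q (exp (- z)) = 0"
      if "z \<in> (\<lambda>\<eta>. \<i> * complex_of_real \<eta>) ` {-\<delta><..<\<delta>}" for z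
      using that arc by auto
  qed
qed

lemma laurent_series_vanishes_on_annulus_if_vanishes_on_arc:
  fixes P Q :: "complex fps"
  assumes "1 < R" and P: "ereal R \<le> fps_conv_radius P" and Q: "ereal R \<le> fps_conv_radius Q"
    and "0 < \<delta>"
    and arc: "\<And>\<eta>. \<bar>\<eta>\<bar> < \<delta> \<Longrightarrow> eval_fps P (exp (\<i> * of_real \<eta>)) + eval_fps Q (exp (- (\<i> * of_real \<eta>))) = 0"
    and w: "1/R < norm w" "norm w < R"
  shows "eval_fps P w + eval_fps Q (inverse w) = 0"
proof -
  have "w \<noteq> 0"
    using w \<open>1 < R\<close> by auto
  have "ln (norm w) < ln R" "ln (1/R) < ln (norm w)"
    using w \<open>1 < R\<close> \<open>w \<noteq> 0\<close> by (subst ln_less_cancel_iff; auto)+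
  moreover have "ln (1/R) = - ln R"
    using \<open>1 < R\<close> by (simp add: ln_div)
  ultimately have "\<bar>Re (Ln w)\<bar> < ln R"
    using \<open>w \<noteq> 0\<close> by auto
  from laurent_series_vanishes_on_strip_if_vanishes_on_arc[OF \<open>1 < R\<close> P Q \<open>0 < \<delta>\<close> arc this] show ?thesis
    using \<open>w \<noteq> 0\<close> by (simp add: exp_minus)
qed

lemma symmetric_exp_sums_tendsto_eval_fps:
  fixes b :: "int \<Rightarrow> complex" and P Q :: "complex fps"
  assumes P: "\<And>n. fps_nth P n = b (int n)" and Q: "\<And>n. fps_nth Q n = (if n = 0 then 0 else b (- int n))"
    and "1 < R" and P_radius: "ereal R \<le> fps_conv_radius P" and Q_radius: "ereal R \<le> fps_conv_radius Q"
  shows "(\<lambda>N. \<Sum>n\<in>{-int N..int N}. b n * exp (\<i> * of_real \<eta> * of_int n))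
           \<longlonglongrightarrow> eval_fps P (exp (\<i> * of_real \<eta>)) + eval_fps Q (exp (- (\<i> * of_real \<eta>)))"
proof -
  define w where "w = exp (\<i> * of_real \<eta>)"
  have "norm w < R" "norm (inverse w) < R"
    using \<open>1 < R\<close> by (simp_all add: w_def norm_inverse)
  then have "(\<lambda>n. fps_nth P n * w ^ n) sums eval_fps P w"
    "(\<lambda>n. fps_nth Q n * inverse w ^ n) sums eval_fps Q (inverse w)"
    using mem_eball_fps_conv_radius[OF P_radius] mem_eball_fps_conv_radius[OF Q_radius]
    by (auto intro: sums_eval_fps)
  then have "(\<lambda>N. \<Sum>n<Suc N. fps_nth P n * w ^ n) \<longlonglongrightarrow> eval_fps P w"
    "(\<lambda>N. \<Sum>n<Suc N. fps_nth Q n * inverse w ^ n) \<longlonglongrightarrow> eval_fps Q (inverse w)"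
    unfolding sums_def by (auto dest!: LIMSEQ_Suc simp del: sum.lessThan_Suc)
  moreover have "(\<Sum>n\<in>{-int N..int N}. b n * exp (\<i> * of_real \<eta> * of_int n))
      = (\<Sum>n<Suc N. fps_nth P n * w ^ n) + (\<Sum>n<Suc N. fps_nth Q n * inverse w ^ n)" for N
  proof -
    have "exp (\<i> * of_real \<eta> * of_int (int n)) = w ^ n" for n
      unfolding w_def by (subst exp_of_nat_mult[symmetric]) (simp add: mult.commute)
    moreover have "exp (\<i> * of_real \<eta> * of_int (- int n)) = inverse w ^ n" for n
      unfolding w_def
      by (subst power_inverse, subst exp_of_nat_mult[symmetric]) (simp add: mult.commute exp_minus)
    ultimately show ?thesis
      unfolding sum_symmetric_int_interval
      by (intro arg_cong2[where f = "(+)"] sum.cong refl) (simp_all add: P Q)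
  qed
  ultimately show ?thesis
    by (simp add: tendsto_add w_def exp_minus)
qed

lemma eq_0_if_symmetric_exp_sums_tendsto_0:
  fixes b :: "int \<Rightarrow> complex"
  assumes decay: "\<And>n. norm (b n) \<le> L * r ^ nat \<bar>n\<bar>" and "0 < r" "r < 1" and "0 < \<delta>"
    and sums: "\<And>\<eta>. \<bar>\<eta>\<bar> < \<delta> \<Longrightarrow> (\<lambda>N. \<Sum>n\<in>{-int N..int N}. b n * exp (\<i> * of_real \<eta> * of_int n)) \<longlonglongrightarrow> 0"
  shows "b n = 0"
proof -
  define R where "R = (1 + 1/r) / 2"
  have "1 < R" "r * R < 1"
    using \<open>0 < r\<close> \<open>r < 1\<close> by (auto simp: R_def field_simps)
  define P where "P = Abs_fps (\<lambda>n. b (int n))"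
  define Q where "Q = Abs_fps (\<lambda>n. if n = 0 then 0 else b (- int n))"
  have "norm (b 0) \<le> L"
    using decay[of 0] by simp
  then have "0 \<le> L"
    using norm_ge_zero[of "b 0"] by linarith
  have P_radius: "ereal R \<le> fps_conv_radius P"
  proof (rule fps_conv_radius_ge_if_norm_nth_le)
    show "norm (fps_nth P n) \<le> L * r ^ n" for n
      using decay[of "int n"] by (simp add: P_def)
  qed (use \<open>0 < r\<close> \<open>1 < R\<close> \<open>r * R < 1\<close> in auto)
  have Q_radius: "ereal R \<le> fps_conv_radius Q"
  proof (rule fps_conv_radius_ge_if_norm_nth_le)
    show "norm (fps_nth Q n) \<le> L * r ^ n" for n
      using decay[of "- int n"] \<open>0 \<le> L\<close> by (simp add: Q_def)
  qed (use \<open>0 < r\<close> \<open>1 < R\<close> \<open>r * R < 1\<close> in auto)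
  have "eval_fps P (exp (\<i> * of_real \<eta>)) + eval_fps Q (exp (- (\<i> * of_real \<eta>))) = 0"
    if "\<bar>\<eta>\<bar> < \<delta>" for \<eta>
    using LIMSEQ_unique[OF symmetric_exp_sums_tendsto_eval_fps[OF _ _ \<open>1 < R\<close> P_radius Q_radius] sums[OF that]]
    by (simp add: P_def Q_def)
  then have "P = 0" "Q = 0"
    using fps_eq_0_if_laurent_series_vanishes_on_annulus[OF \<open>1 < R\<close> P_radius Q_radius]
      laurent_series_vanishes_on_annulus_if_vanishes_on_arc[OF \<open>1 < R\<close> P_radius Q_radius \<open>0 < \<delta>\<close>]
    by (auto simp: Q_def)
  then have "fps_nth P (nat n) = 0" "fps_nth Q (nat (- n)) = 0"
    by simp_all
  then show "b n = 0"
    by (cases "n \<ge> 0") (auto simp: P_def Q_def split: if_splits)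
qed

section \<open>Functions of exponential type\<close>

lemma eq_0_if_samples_decay_exponentially:
  fixes f :: "complex \<Rightarrow> complex"
  assumes holo: "f holomorphic_on UNIV"
    and decay: "\<And>z. z \<noteq> 0 \<Longrightarrow> norm (f z) \<le> K * exp (\<tau> * \<bar>Im z\<bar>) / (norm z)^2"
    and "K \<ge> 0" and "\<tau> < pi"
    and samples: "\<And>n::int. norm (f (of_int n)) \<le> L * r ^ nat \<bar>n\<bar>" and "0 < r" "r < 1"
  shows "f w = 0"
proof -
  have "(-1) ^ nat \<bar>n\<bar> * f (of_int n) = 0" for n
  proof (rule eq_0_if_symmetric_exp_sums_tendsto_0[where \<delta> = "pi - \<tau>"])
    show "norm ((-1) ^ nat \<bar>n\<bar> * f (of_int n)) \<le> L * r ^ nat \<bar>n\<bar>" for n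
      using samples[of n] by (simp add: norm_mult norm_power)
    show "(\<lambda>N. \<Sum>n\<in>{-int N..int N}. (-1) ^ nat \<bar>n\<bar> * f (of_int n) * exp (\<i> * of_real \<eta> * of_int n))
            \<longlonglongrightarrow> 0" if "\<bar>\<eta>\<bar> < pi - \<tau>" for \<eta>
    proof (rule alternating_exp_sums_tendsto_0[OF holo decay \<open>K \<ge> 0\<close>])
      show "\<tau> + \<bar>\<eta>\<bar> \<le> pi"
        using that by linarith
    qed
  qed (use \<open>0 < r\<close> \<open>r < 1\<close> \<open>\<tau> < pi\<close> in auto)
  then have "f (of_int n) = 0" for n :: int
    by simp
  then show ?thesis
    using eq_0_if_vanishes_on_Ints[OF holo decay \<open>K \<ge> 0\<close>] \<open>\<tau> < pi\<close> by simp
qed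

lemma bernstein_space_deriv_bounded_on_reals:
  assumes "g \<in> bernstein_space \<rho>"
  obtains M where "0 \<le> M" "\<And>z. Im z = 0 \<Longrightarrow> norm (deriv g z) \<le> M"
proof -
  have holo: "g holomorphic_on UNIV"
    using assms by (simp add: bernstein_space_def)
  obtain C where "0 < C" and C: "\<And>z. norm (g z) \<le> C * exp (\<rho> * \<bar>Im z\<bar>)"
    using assms by (auto simp: bernstein_space_def)
  have "norm (deriv g z) \<le> C * exp \<bar>\<rho>\<bar>" if "Im z = 0" for z
  proof -
    have "norm ((deriv ^^ 1) g z) \<le> fact 1 * (C * exp \<bar>\<rho>\<bar>) / 1 ^ 1"
    proof (rule Cauchy_inequality)
      show "g holomorphic_on ball z 1" "continuous_on (cball z 1) g"
        using holo holomorphic_on_subset holomorphic_on_imp_continuous_on by blast+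
      fix y assume "norm (z - y) = 1"
      then have "\<bar>Im y\<bar> \<le> 1"
        using abs_Im_le_cmod[of "z - y"] that by simp
      then have "\<rho> * \<bar>Im y\<bar> \<le> \<bar>\<rho>\<bar>"
        using mult_right_mono[OF abs_ge_self[of \<rho>] abs_ge_zero[of "Im y"]] mult_left_le[of "\<bar>Im y\<bar>" "\<bar>\<rho>\<bar>"]
        by linarith
      then have "C * exp (\<rho> * \<bar>Im y\<bar>) \<le> C * exp \<bar>\<rho>\<bar>"
        using \<open>0 < C\<close> by simp
      with C[of y] show "norm (g y) \<le> C * exp \<bar>\<rho>\<bar>"
        by linarith
    qed simp
    then show ?thesis
      by simp
  qed
  with \<open>0 < C\<close> show ?thesis
    using that[of "C * exp \<bar>\<rho>\<bar>"] by simp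
qed

lemma bernstein_space_lipschitz_on_reals:
  assumes "g \<in> bernstein_space \<rho>"
  obtains M where "0 \<le> M" "\<And>x y. norm (g (of_real x) - g (of_real y)) \<le> M * \<bar>x - y\<bar>"
proof -
  have holo: "g holomorphic_on UNIV"
    using assms by (simp add: bernstein_space_def)
  obtain M where "0 \<le> M" and M: "\<And>z. Im z = 0 \<Longrightarrow> norm (deriv g z) \<le> M"
    using bernstein_space_deriv_bounded_on_reals[OF assms] by blast
  have "norm (g (of_real x) - g (of_real y)) \<le> M * \<bar>x - y\<bar>" for x y
  proof -
    have "norm (g (of_real x) - g (of_real y)) \<le> M * norm (complex_of_real x - of_real y)"
    proof (rule field_differentiable_bound[of "closed_segment (of_real y) (of_real x)" g "deriv g"])
      show "(g has_field_derivative deriv g z) (at z within closed_segment (of_real y) (of_real x))" for z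
        using holo by (intro holomorphic_derivI) auto
      show "norm (deriv g z) \<le> M" if "z \<in> closed_segment (of_real y) (of_real x)" for z
        using that M by (auto simp: closed_segment_same_Im)
    qed auto
    then show ?thesis
      by (simp flip: of_real_diff)
  qed
  with \<open>0 \<le> M\<close> show ?thesis
    using that by blast
qed

lemma bernstein_space_samples_decay:
  assumes "g \<in> bernstein_space \<rho>" and "0 \<le> C"
    and perturbation: "\<And>n. \<bar>a n\<bar> \<le> C' * r ^ nat \<bar>n\<bar>"
    and near_zero: "\<And>n. norm (g (of_real (real_of_int n + a n))) \<le> C * \<bar>a n\<bar>"
  obtains L where "\<And>n::int. norm (g (of_int n)) \<le> L * r ^ nat \<bar>n\<bar>"
proof -
  obtain M where "0 \<le> M" and lipschitz: "\<And>x y. norm (g (of_real x) - g (of_real y)) \<le> M * \<bar>x - y\<bar>"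
    using bernstein_space_lipschitz_on_reals[OF assms(1)] by blast
  have "norm (g (of_int n)) \<le> (C + M) * C' * r ^ nat \<bar>n\<bar>" for n
  proof -
    have "norm (g (of_int n) - g (of_real (real_of_int n + a n))) \<le> M * \<bar>a n\<bar>"
      using lipschitz[of "real_of_int n" "real_of_int n + a n"] by simp
    then have "norm (g (of_int n)) \<le> norm (g (of_real (real_of_int n + a n))) + M * \<bar>a n\<bar>"
      using norm_triangle_sub[of "g (of_int n)" "g (of_real (real_of_int n + a n))"] by linarith
    also have "\<dots> \<le> (C + M) * \<bar>a n\<bar>"
      using near_zero[of n] by (simp add: distrib_right)
    also have "\<dots> \<le> (C + M) * (C' * r ^ nat \<bar>n\<bar>)"
      using perturbation[of n] \<open>0 \<le> C\<close> \<open>0 \<le> M\<close> by (intro mult_left_mono) auto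
    finally show ?thesis
      by (simp add: mult.assoc)
  qed
  then show ?thesis
    using that by blast
qed

lemma bernstein_space_mult_sinc_squared_decay:
  assumes "g \<in> bernstein_space \<rho>" "0 < \<epsilon>"
  obtains K where "0 \<le> K"
    "\<And>z. z \<noteq> 0 \<Longrightarrow> norm (g z * sinc (of_real \<epsilon> * z) ^ 2) \<le> K * exp ((\<rho> + 2 * \<epsilon>) * \<bar>Im z\<bar>) / (norm z)^2"
proof -
  obtain C where "0 < C" and C: "\<And>z. norm (g z) \<le> C * exp (\<rho> * \<bar>Im z\<bar>)"
    using assms by (auto simp: bernstein_space_def)
  have "norm (g z * sinc (of_real \<epsilon> * z) ^ 2) \<le> C / \<epsilon>^2 * exp ((\<rho> + 2 * \<epsilon>) * \<bar>Im z\<bar>) / (norm z)^2"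
    if "z \<noteq> 0" for z
  proof -
    have "norm (sinc (of_real \<epsilon> * z)) \<le> exp (\<epsilon> * \<bar>Im z\<bar>) / (\<epsilon> * norm z)"
      using norm_sinc_le[of "of_real \<epsilon> * z"] that \<open>0 < \<epsilon>\<close> by (simp add: norm_mult abs_mult)
    then have "norm (g z * sinc (of_real \<epsilon> * z) ^ 2)
                 \<le> C * exp (\<rho> * \<bar>Im z\<bar>) * (exp (\<epsilon> * \<bar>Im z\<bar>) / (\<epsilon> * norm z)) ^ 2"
      unfolding norm_mult norm_power using C \<open>0 < C\<close> by (intro mult_mono power_mono) auto
    also have "\<dots> = C / \<epsilon>^2 * exp ((\<rho> + 2 * \<epsilon>) * \<bar>Im z\<bar>) / (norm z)^2"
      using \<open>0 < \<epsilon>\<close> that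
      by (simp add: power2_eq_square field_simps exp_add[symmetric])
    finally show ?thesis .
  qed
  moreover have "0 \<le> C / \<epsilon>^2"
    using \<open>0 < C\<close> by simp
  ultimately show ?thesis
    using that by blast
qed

lemma entire_eq_0_if_eq_0_off_reals:
  assumes "g holomorphic_on UNIV" and "\<And>z. Im z \<noteq> 0 \<Longrightarrow> g z = 0"
  shows "g z = 0"
proof (rule analytic_continuation[OF assms(1) open_UNIV connected_UNIV])
  show "\<i> islimpt {z. 0 < Im z}"
    using open_halfspace_Im_gt by (intro interior_limit_point) (simp add: interior_open)
qed (use assms(2) in auto)

theorem lemma4p3:
  fixes a :: "int \<Rightarrow> real" and C' r \<rho> C :: real and g :: "complex \<Rightarrow> complex"
  assumes "C' > 0" and "0 < r" and "r < 1"
    and "\<And>n. a n \<noteq> 0"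
    and "\<And>n. \<bar>a n\<bar> \<le> C' * r ^ nat \<bar>n\<bar>"
    and "0 < \<rho>" and "\<rho> < pi"
    and "g \<in> bernstein_space \<rho>"
    and "C > 0"
    and "\<And>n. norm (g (of_real (real_of_int n + a n))) \<le> C * \<bar>a n\<bar>"
  shows "\<forall>z. g z = 0"
proof -
  have holo: "g holomorphic_on UNIV"
    using assms(8) by (simp add: bernstein_space_def)
  obtain L where samples: "\<And>n::int. norm (g (of_int n)) \<le> L * r ^ nat \<bar>n\<bar>"
    using bernstein_space_samples_decay[OF assms(8) _ assms(5,10)] assms(9) by force
  define \<epsilon> where "\<epsilon> = (pi - \<rho>) / 4"
  define f where "f z = g z * sinc (of_real \<epsilon> * z) ^ 2" for z
  have "0 < \<epsilon>" "\<rho> + 2 * \<epsilon> < pi"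
    using assms(7) by (simp_all add: \<epsilon>_def field_simps)
  obtain K where "0 \<le> K" and decay: "\<And>z. z \<noteq> 0 \<Longrightarrow> norm (f z) \<le> K * exp ((\<rho> + 2 * \<epsilon>) * \<bar>Im z\<bar>) / (norm z)^2"
    unfolding f_def using bernstein_space_mult_sinc_squared_decay[OF assms(8) \<open>0 < \<epsilon>\<close>] by blast
  have "norm (f (of_int n)) \<le> norm (g (of_int n))" for n :: int
    using norm_sinc_of_real_le_1[of "\<epsilon> * of_int n"]
    by (simp add: f_def norm_mult norm_power mult_left_le power_le_one)
  then have "norm (f (of_int n)) \<le> L * r ^ nat \<bar>n\<bar>" for n :: int
    using samples[of n] by (meson order.trans)
  moreover have "f holomorphic_on UNIV"
    unfolding f_def by (intro holomorphic_intros holo)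
  ultimately have f_eq_0: "f z = 0" for z
    using eq_0_if_samples_decay_exponentially[OF _ decay \<open>0 \<le> K\<close> \<open>\<rho> + 2 * \<epsilon> < pi\<close>] assms(2,3) by blast
  have "g z = 0" if "Im z \<noteq> 0" for z
    using f_eq_0[of z] sinc_neq_0_if_Im_neq_0[of "of_real \<epsilon> * z"] that \<open>0 < \<epsilon>\<close> by (simp add: f_def)
  then show ?thesis
    using entire_eq_0_if_eq_0_off_reals[OF holo] by blast
qed

end
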